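(* Let $X$ be a product system over $\mathbb{Z}_+^N$ with coefficients in a C*-algebra $A$ and let $\emptyset\neq F\subseteq[N]$. If $a\in\mathcal{I}_F$ then $\langle \xi, a\eta\rangle\in\mathcal{I}_F$ for all $\xi,\eta\in X_{\underline{m}}$ and all $\underline{m}\in\mathbb{Z}_+^N$ with $\underline{m}\perp F$.
   Context: Notation: $[N]=\{1,\dots,N\}$; $\mathbf{i}$ denotes the $i$-th standard generator of $\mathbb{Z}_+^N$; $\operatorname{supp}\underline{n}=\{i:n_i\neq0\}$; $\underline{m}\perp F$ means $\operatorname{supp}\underline{m}\cap F=\emptyset$; $\underline{1}=(1,\dots,1)$; $\le$ is the coordinatewise order. A product system $X$ over $\mathbb{Z}_+^N$ with coefficients in $A$ is a family $\{X_{\underline{n}}\}$ of C*-correspondences over $A$ (left actions $\phi_{\underline{n}}:A\to\mathcal{L}(X_{\underline{n}})$), $X_{\underline{0}}=A$ with $\phi_{\underline 0}$ left multiplication, with an associative multiplication $X_{\underline{n}}\times X_{\underline{m}}\to X_{\underline{n}+\underline{m}}$, $(\xi,\eta)\mapsto\xi\eta$, inducing unitary equivalences $X_{\underline{n}}\otimes_AX_{\underline{m}}\cong X_{\underline{n}+\underline{m}}$ for $\underline n,\underline m\neq\underline 0$ and given by module actions when one index is $\underline 0$. For $\emptyset\neq F\subseteq[N]$ define the ideals \[\mathcal{J}_F=\Big(\bigcap_{i\in F}\ker\phi_{\mathbf{i}}\Big)^\perp\cap\bigcap_{\underline{n}\le\underline{1}}\phi_{\underline{n}}^{-1}(\mathcal{K}(X_{\underline{n}})),\]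 where $^\perp$ is the annihilator in $A$, and \[\mathcal{I}_F=\{a\in\mathcal{J}_F:\langle\xi,a\eta\rangle\in\mathcal{J}_F \text{ for all }\xi,\eta\in X_{\underline{m}},\ \underline{m}\perp F\}.\] *)

theory Defs
  imports Complex_Main
begin

class cvector = ab_group_add +
  fixes scaleC :: "complex \<Rightarrow> 'a \<Rightarrow> 'a" (infixr "*\<^sub>C" 75)
  assumes scaleC_add_right: "c *\<^sub>C (x + y) = c *\<^sub>C x + c *\<^sub>C y"
    and scaleC_add_left: "(b + c) *\<^sub>C x = b *\<^sub>C x + c *\<^sub>C x"
    and scaleC_scaleC: "b *\<^sub>C (c *\<^sub>C x) = (b * c) *\<^sub>C x"
    and scaleC_one: "1 *\<^sub>C x = x"

class cstar_algebra = real_normed_algebra + banach + cvector +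
  fixes cstar :: "'a \<Rightarrow> 'a"
  assumes scaleR_scaleC: "scaleR r x = complex_of_real r *\<^sub>C x"
    and norm_scaleC: "norm (c *\<^sub>C x) = cmod c * norm x"
    and scaleC_mult_left: "(c *\<^sub>C x) * y = c *\<^sub>C (x * y)"
    and scaleC_mult_right: "x * (c *\<^sub>C y) = c *\<^sub>C (x * y)"
    and cstar_cstar: "cstar (cstar x) = x"
    and cstar_add: "cstar (x + y) = cstar x + cstar y"
    and cstar_scaleC: "cstar (c *\<^sub>C x) = cnj c *\<^sub>C cstar x"
    and cstar_mult: "cstar (x * y) = cstar y * cstar x"
    and cstar_identity: "norm (cstar x * x) = norm x ^ 2"

definition xnorm :: "('x \<Rightarrow> 'x \<Rightarrow> 'a::cstar_algebra) \<Rightarrow> 'x \<Rightarrow> real" where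
  "xnorm inner \<xi> = sqrt (norm (inner \<xi> \<xi>))"

definition hilbert_module ::
  "'x::cvector set \<Rightarrow> ('x \<Rightarrow> 'a::cstar_algebra \<Rightarrow> 'x) \<Rightarrow> ('x \<Rightarrow> 'x \<Rightarrow> 'a) \<Rightarrow> bool" where
  "hilbert_module M ract inner \<longleftrightarrow>
     0 \<in> M \<and>
     (\<forall>x\<in>M. \<forall>y\<in>M. x + y \<in> M) \<and>
     (\<forall>x\<in>M. \<forall>c. c *\<^sub>C x \<in> M) \<and>
     (\<forall>x\<in>M. \<forall>a. ract x a \<in> M) \<and>
     (\<forall>x\<in>M. \<forall>y\<in>M. \<forall>a. ract (x + y) a = ract x a + ract y a) \<and>
     (\<forall>x\<in>M. \<forall>a b. ract x (a + b) = ract x a + ract x b) \<and>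
     (\<forall>x\<in>M. \<forall>a b. ract (ract x a) b = ract x (a * b)) \<and>
     (\<forall>x\<in>M. \<forall>a c. c *\<^sub>C ract x a = ract (c *\<^sub>C x) a \<and> ract x (c *\<^sub>C a) = c *\<^sub>C ract x a) \<and>
     (\<forall>x\<in>M. \<forall>y\<in>M. \<forall>z\<in>M. inner x (y + z) = inner x y + inner x z) \<and>
     (\<forall>x\<in>M. \<forall>y\<in>M. \<forall>c. inner x (c *\<^sub>C y) = c *\<^sub>C inner x y) \<and>
     (\<forall>x\<in>M. \<forall>y\<in>M. \<forall>a. inner x (ract y a) = inner x y * a) \<and>
     (\<forall>x\<in>M. \<forall>y\<in>M. inner y x = cstar (inner x y)) \<and>
     (\<forall>x\<in>M. \<exists>b. inner x x = cstar b * b) \<and>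
     (\<forall>x\<in>M. inner x x = 0 \<longrightarrow> x = 0) \<and>
     (\<forall>s. (\<forall>k. s k \<in> M) \<and>
          (\<forall>\<epsilon>>0. \<exists>K::nat. \<forall>p q. K \<le> p \<and> K \<le> q \<longrightarrow> xnorm inner (s p - s q) < \<epsilon>) \<longrightarrow>
          (\<exists>x\<in>M. \<forall>\<epsilon>>0. \<exists>K::nat. \<forall>p\<ge>K. xnorm inner (s p - x) < \<epsilon>))"

text \<open>A C*-correspondence: a right Hilbert module with a left action given by a
  *-homomorphism into the adjointable operators (the adjoint of phi(a) being phi(a*)).\<close>
definition correspondence ::
  "'x::cvector set \<Rightarrow> ('a::cstar_algebra \<Rightarrow> 'x \<Rightarrow> 'x) \<Rightarrow> ('x \<Rightarrow> 'a \<Rightarrow> 'x) \<Rightarrow> ('x \<Rightarrow> 'x \<Rightarrow> 'a) \<Rightarrow> bool" where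
  "correspondence M lact ract inner \<longleftrightarrow>
     hilbert_module M ract inner \<and>
     (\<forall>a. \<forall>x\<in>M. lact a x \<in> M) \<and>
     (\<forall>a. \<forall>x\<in>M. \<forall>y\<in>M. inner (lact a x) y = inner x (lact (cstar a) y)) \<and>
     (\<forall>a b. \<forall>x\<in>M. lact (a * b) x = lact a (lact b x)) \<and>
     (\<forall>a b. \<forall>x\<in>M. lact (a + b) x = lact a x + lact b x) \<and>
     (\<forall>a c. \<forall>x\<in>M. lact (c *\<^sub>C a) x = c *\<^sub>C lact a x)"

text \<open>Z_+^N is modelled as functions 'i => nat with a finite index type 'i (so [N] = UNIV).
  All fibres X n live in one ambient complex vector space 'x, with global operations
  restricted to the fibres. X_0 is identified with A via the bijection emb.\<close>

definition zvec :: "'i \<Rightarrow> nat" where "zvec = (\<lambda>_. 0)"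

definition gen :: "'i \<Rightarrow> 'i \<Rightarrow> nat" where "gen i = (\<lambda>j. if j = i then 1 else 0)"

definition product_system ::
  "(('i::finite \<Rightarrow> nat) \<Rightarrow> 'x::cvector set) \<Rightarrow> ('a::cstar_algebra \<Rightarrow> 'x) \<Rightarrow>
   ('a \<Rightarrow> 'x \<Rightarrow> 'x) \<Rightarrow> ('x \<Rightarrow> 'a \<Rightarrow> 'x) \<Rightarrow> ('x \<Rightarrow> 'x \<Rightarrow> 'a) \<Rightarrow> ('x \<Rightarrow> 'x \<Rightarrow> 'x) \<Rightarrow> bool" where
  "product_system X emb lact ract inner mult \<longleftrightarrow>
     (\<forall>n. correspondence (X n) lact ract inner) \<and>
     \<comment> \<open>X_0 = A, with phi_0 left multiplication\<close>
     bij_betw emb UNIV (X zvec) \<and>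
     (\<forall>a b. emb (a + b) = emb a + emb b) \<and>
     (\<forall>a c. emb (c *\<^sub>C a) = c *\<^sub>C emb a) \<and>
     (\<forall>a b. ract (emb a) b = emb (a * b)) \<and>
     (\<forall>a b. inner (emb a) (emb b) = cstar a * b) \<and>
     (\<forall>a b. lact a (emb b) = emb (a * b)) \<and>
     \<comment> \<open>multiplication X_n x X_m \<rightarrow> X_(n+m), associative\<close>
     (\<forall>n m. \<forall>\<xi>\<in>X n. \<forall>\<eta>\<in>X m. mult \<xi> \<eta> \<in> X (\<lambda>i. n i + m i)) \<and>
     (\<forall>n m k. \<forall>\<xi>\<in>X n. \<forall>\<eta>\<in>X m. \<forall>\<zeta>\<in>X k. mult (mult \<xi> \<eta>) \<zeta> = mult \<xi> (mult \<eta> \<zeta>)) \<and>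
     \<comment> \<open>given by the module actions when one index is 0\<close>
     (\<forall>m a. \<forall>\<xi>\<in>X m. mult (emb a) \<xi> = lact a \<xi> \<and> mult \<xi> (emb a) = ract \<xi> a) \<and>
     \<comment> \<open>for n, m nonzero: xi (x) eta \<mapsto> xi eta induces a unitary X_n (x)_A X_m \<cong> X_(n+m)\<close>
     (\<forall>n m. n \<noteq> zvec \<and> m \<noteq> zvec \<longrightarrow>
        (\<forall>\<xi>\<in>X n. \<forall>\<xi>'\<in>X n. \<forall>\<eta>\<in>X m. mult (\<xi> + \<xi>') \<eta> = mult \<xi> \<eta> + mult \<xi>' \<eta>) \<and>
        (\<forall>\<xi>\<in>X n. \<forall>\<eta>\<in>X m. \<forall>\<eta>'\<in>X m. mult \<xi> (\<eta> + \<eta>') = mult \<xi> \<eta> + mult \<xi> \<eta>') \<and>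
        (\<forall>\<xi>\<in>X n. \<forall>\<eta>\<in>X m. \<forall>c. mult (c *\<^sub>C \<xi>) \<eta> = c *\<^sub>C mult \<xi> \<eta> \<and> mult \<xi> (c *\<^sub>C \<eta>) = c *\<^sub>C mult \<xi> \<eta>) \<and>
        (\<forall>\<xi>\<in>X n. \<forall>\<eta>\<in>X m. \<forall>a. mult (ract \<xi> a) \<eta> = mult \<xi> (lact a \<eta>)) \<and>
        (\<forall>\<xi>\<in>X n. \<forall>\<eta>\<in>X m. \<forall>a. mult \<xi> (ract \<eta> a) = ract (mult \<xi> \<eta>) a) \<and>
        (\<forall>\<xi>\<in>X n. \<forall>\<eta>\<in>X m. \<forall>a. lact a (mult \<xi> \<eta>) = mult (lact a \<xi>) \<eta>) \<and>
        (\<forall>\<xi>\<in>X n. \<forall>\<xi>'\<in>X n. \<forall>\<eta>\<in>X m. \<forall>\<eta>'\<in>X m.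
            inner (mult \<xi> \<eta>) (mult \<xi>' \<eta>') = inner \<eta> (lact (inner \<xi> \<xi>') \<eta>')) \<and>
        (\<forall>\<zeta>\<in>X (\<lambda>i. n i + m i). \<forall>\<epsilon>>0. \<exists>ps. set ps \<subseteq> X n \<times> X m \<and>
            xnorm inner (\<zeta> - sum_list (map (\<lambda>(\<xi>, \<eta>). mult \<xi> \<eta>) ps)) < \<epsilon>))"

definition annihilator :: "'a::cstar_algebra set \<Rightarrow> 'a set" where
  "annihilator S = {a. \<forall>b\<in>S. a * b = 0}"

definition lker :: "(('i \<Rightarrow> nat) \<Rightarrow> 'x set) \<Rightarrow> ('a \<Rightarrow> 'x \<Rightarrow> 'x::cvector) \<Rightarrow> ('i \<Rightarrow> nat) \<Rightarrow> 'a::cstar_algebra set" where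
  "lker X lact n = {a. \<forall>\<xi>\<in>X n. lact a \<xi> = 0}"

text \<open>T belongs to K(X_n), the closed linear span (in operator norm) of the rank-one
  operators theta_{xi,eta} = xi <eta, _>; complex scalars are absorbed into xi.\<close>
definition compact_op ::
  "(('i \<Rightarrow> nat) \<Rightarrow> 'x::cvector set) \<Rightarrow> ('x \<Rightarrow> 'a::cstar_algebra \<Rightarrow> 'x) \<Rightarrow> ('x \<Rightarrow> 'x \<Rightarrow> 'a) \<Rightarrow>
    ('i \<Rightarrow> nat) \<Rightarrow> ('x \<Rightarrow> 'x) \<Rightarrow> bool" where
  "compact_op X ract inner n T \<longleftrightarrow>
     (\<forall>\<epsilon>>0. \<exists>ps. set ps \<subseteq> X n \<times> X n \<and>
        (\<forall>\<zeta>\<in>X n. xnorm inner (T \<zeta> - sum_list (map (\<lambda>(\<xi>, \<eta>). ract \<xi> (inner \<eta> \<zeta>)) ps))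
                    \<le> \<epsilon> * xnorm inner \<zeta>))"

definition J_ideal ::
  "(('i::finite \<Rightarrow> nat) \<Rightarrow> 'x::cvector set) \<Rightarrow> ('a::cstar_algebra \<Rightarrow> 'x \<Rightarrow> 'x) \<Rightarrow>
   ('x \<Rightarrow> 'a \<Rightarrow> 'x) \<Rightarrow> ('x \<Rightarrow> 'x \<Rightarrow> 'a) \<Rightarrow> 'i set \<Rightarrow> 'a set" where
  "J_ideal X lact ract inner F =
     annihilator (\<Inter>i\<in>F. lker X lact (gen i)) \<inter>
     {a. \<forall>n. (\<forall>i. n i \<le> 1) \<longrightarrow> compact_op X ract inner n (lact a)}"

definition I_ideal ::
  "(('i::finite \<Rightarrow> nat) \<Rightarrow> 'x::cvector set) \<Rightarrow> ('a::cstar_algebra \<Rightarrow> 'x \<Rightarrow> 'x) \<Rightarrow>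
   ('x \<Rightarrow> 'a \<Rightarrow> 'x) \<Rightarrow> ('x \<Rightarrow> 'x \<Rightarrow> 'a) \<Rightarrow> 'i set \<Rightarrow> 'a set" where
  "I_ideal X lact ract inner F =
     {a \<in> J_ideal X lact ract inner F.
        \<forall>m. (\<forall>i\<in>F. m i = 0) \<longrightarrow>
          (\<forall>\<xi>\<in>X m. \<forall>\<eta>\<in>X m. inner \<xi> (lact a \<eta>) \<in> J_ideal X lact ract inner F)}"

end

theory Submission
  imports Defs
begin

text \<open>For \<open>\<xi>, \<eta> \<in> X\<^sub>m\<close> and \<open>\<zeta>, \<zeta>' \<in> X\<^sub>k\<close> the compression identity
  \<open>\<langle>\<zeta>, \<langle>\<xi>, a\<eta>\<rangle>\<zeta>'\<rangle> = \<langle>\<xi>\<zeta>, a(\<eta>\<zeta>')\<rangle>\<close> holds, with \<open>\<xi>\<zeta>, \<eta>\<zeta>' \<in> X\<^sub>m\<^sub>+\<^sub>k\<close>: for \<open>m, k \<noteq> 0\<close> it is the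
  inner product formula on \<open>X\<^sub>m \<otimes> X\<^sub>k \<cong> X\<^sub>m\<^sub>+\<^sub>k\<close>, and when one index is \<open>0\<close> the product is a
  module action and the identity is a direct computation in the correspondence.
  If \<open>m \<perp> F\<close> and \<open>k \<perp> F\<close> then \<open>m + k \<perp> F\<close>, so \<open>a \<in> \<I>\<^sub>F\<close> puts the right-hand side into \<open>\<J>\<^sub>F\<close>.\<close>

lemma scaleC_zero_left: "(0::complex) *\<^sub>C (x::'a::cvector) = 0"
proof -
  have "0 *\<^sub>C x = 0 *\<^sub>C x + 0 *\<^sub>C x" using scaleC_add_left[of 0 0 x] by simp
  thus ?thesis by simp
qed

lemma scaleC_minus_one: "(-1::complex) *\<^sub>C (x::'a::cvector) = - x"
proof -
  have "(-1::complex) *\<^sub>C x + x = 0"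
    using scaleC_add_left[of "-1" 1 x] scaleC_one[of x] scaleC_zero_left[of x] by simp
  thus ?thesis by (simp add: eq_neg_iff_add_eq_0)
qed

context
  fixes M :: "'x::cvector set" and ract :: "'x \<Rightarrow> 'a::cstar_algebra \<Rightarrow> 'x"
    and inner :: "'x \<Rightarrow> 'x \<Rightarrow> 'a"
  assumes hm: "hilbert_module M ract inner"
begin

lemma hilbert_module_add_closed: "x \<in> M \<Longrightarrow> y \<in> M \<Longrightarrow> x + y \<in> M"
  using hm unfolding hilbert_module_def by (elim conjE) meson

lemma hilbert_module_scaleC_closed: "x \<in> M \<Longrightarrow> c *\<^sub>C x \<in> M"
  using hm unfolding hilbert_module_def by (elim conjE) meson

lemma hilbert_module_ract_closed: "x \<in> M \<Longrightarrow> ract x u \<in> M"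
  using hm unfolding hilbert_module_def by (elim conjE) meson

lemma hilbert_module_inner_add_right:
  "x \<in> M \<Longrightarrow> y \<in> M \<Longrightarrow> z \<in> M \<Longrightarrow> inner x (y + z) = inner x y + inner x z"
  using hm unfolding hilbert_module_def by (elim conjE) meson

lemma hilbert_module_inner_scaleC_right:
  "x \<in> M \<Longrightarrow> y \<in> M \<Longrightarrow> inner x (c *\<^sub>C y) = c *\<^sub>C inner x y"
  using hm unfolding hilbert_module_def by (elim conjE) meson

lemma hilbert_module_inner_ract_right:
  "x \<in> M \<Longrightarrow> y \<in> M \<Longrightarrow> inner x (ract y u) = inner x y * u"
  using hm unfolding hilbert_module_def by (elim conjE) meson

lemma hilbert_module_inner_commute:
  "x \<in> M \<Longrightarrow> y \<in> M \<Longrightarrow> inner y x = cstar (inner x y)"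
  using hm unfolding hilbert_module_def by (elim conjE) meson

lemma hilbert_module_inner_self_eq_zero: "x \<in> M \<Longrightarrow> inner x x = 0 \<Longrightarrow> x = 0"
  using hm unfolding hilbert_module_def by (elim conjE) meson

lemma hilbert_module_diff_closed:
  assumes "x \<in> M" "y \<in> M"
  shows "x - y \<in> M"
  using hilbert_module_add_closed[OF assms(1) hilbert_module_scaleC_closed[of y "-1", OF assms(2)]]
  by (simp add: scaleC_minus_one)

lemma hilbert_module_inner_diff_right:
  assumes "z \<in> M" "x \<in> M" "y \<in> M"
  shows "inner z (x - y) = inner z x - inner z y"
  using hilbert_module_inner_add_right[OF assms(1,2) hilbert_module_scaleC_closed[of y "-1", OF assms(3)]]
    hilbert_module_inner_scaleC_right[of z y "-1", OF assms(1,3)]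
  by (simp add: scaleC_minus_one)

lemma hilbert_module_inner_ract_left:
  assumes "x \<in> M" "y \<in> M"
  shows "inner (ract x u) y = cstar u * inner x y"
proof -
  have "inner (ract x u) y = cstar (inner y (ract x u))"
    using hilbert_module_inner_commute[OF assms(2) hilbert_module_ract_closed[OF assms(1)]] .
  also have "\<dots> = cstar u * cstar (inner y x)"
    using hilbert_module_inner_ract_right[OF assms(2,1)] by (simp add: cstar_mult)
  finally show ?thesis
    using hilbert_module_inner_commute[OF assms] by (simp add: cstar_cstar)
qed

lemma hilbert_module_eqI:
  assumes "x \<in> M" "y \<in> M" and "\<And>z. z \<in> M \<Longrightarrow> inner z x = inner z y"
  shows "x = y"
proof -
  have "x - y \<in> M" using hilbert_module_diff_closed[OF assms(1,2)] .
  moreover from this have "inner (x - y) (x - y) = 0"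
    using hilbert_module_inner_diff_right[OF _ assms(1,2)] assms(3) by simp
  ultimately have "x - y = 0" by (rule hilbert_module_inner_self_eq_zero)
  then show ?thesis by simp
qed

end

context
  fixes M :: "'x::cvector set" and lact :: "'a::cstar_algebra \<Rightarrow> 'x \<Rightarrow> 'x"
    and ract :: "'x \<Rightarrow> 'a \<Rightarrow> 'x" and inner :: "'x \<Rightarrow> 'x \<Rightarrow> 'a"
  assumes corr: "correspondence M lact ract inner"
begin

lemma correspondence_hilbert_module: "hilbert_module M ract inner"
  using corr unfolding correspondence_def by (elim conjE) meson

lemma correspondence_lact_closed: "x \<in> M \<Longrightarrow> lact a x \<in> M"
  using corr unfolding correspondence_def by (elim conjE) meson

lemma correspondence_lact_mult: "x \<in> M \<Longrightarrow> lact (a * b) x = lact a (lact b x)"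
  using corr unfolding correspondence_def by (elim conjE) meson

lemma correspondence_inner_lact_right:
  assumes "x \<in> M" "y \<in> M"
  shows "inner x (lact a y) = inner (lact (cstar a) x) y"
  using corr assms unfolding correspondence_def by (simp add: cstar_cstar)

lemma correspondence_lact_ract:
  assumes "\<eta> \<in> M"
  shows "lact a (ract \<eta> u) = ract (lact a \<eta>) u"
proof (rule hilbert_module_eqI[OF correspondence_hilbert_module])
  note hm = correspondence_hilbert_module
  show "lact a (ract \<eta> u) \<in> M" "ract (lact a \<eta>) u \<in> M"
    using assms correspondence_lact_closed hilbert_module_ract_closed[OF hm] by blast+
  fix z assume z: "z \<in> M"
  have "inner z (lact a (ract \<eta> u)) = inner (lact (cstar a) z) \<eta> * u"
    using z assms correspondence_inner_lact_right hilbert_module_ract_closed[OF hm]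
      hilbert_module_inner_ract_right[OF hm] correspondence_lact_closed by simp
  also have "\<dots> = inner z (ract (lact a \<eta>) u)"
    using z assms correspondence_inner_lact_right hilbert_module_inner_ract_right[OF hm]
      correspondence_lact_closed by simp
  finally show "inner z (lact a (ract \<eta> u)) = inner z (ract (lact a \<eta>) u)" .
qed

end

context
  fixes X :: "('i::finite \<Rightarrow> nat) \<Rightarrow> 'x::cvector set" and emb :: "'a::cstar_algebra \<Rightarrow> 'x"
    and lact :: "'a \<Rightarrow> 'x \<Rightarrow> 'x" and ract :: "'x \<Rightarrow> 'a \<Rightarrow> 'x"
    and inner :: "'x \<Rightarrow> 'x \<Rightarrow> 'a" and mult :: "'x \<Rightarrow> 'x \<Rightarrow> 'x"
  assumes ps: "product_system X emb lact ract inner mult"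
begin

lemma product_system_correspondence: "correspondence (X n) lact ract inner"
  using ps unfolding product_system_def by (elim conjE) meson

lemma product_system_hilbert_module: "hilbert_module (X n) ract inner"
  using correspondence_hilbert_module[OF product_system_correspondence] .

lemma product_system_zero_fibre_emb: "z \<in> X zvec \<Longrightarrow> \<exists>u. z = emb u"
proof -
  have "bij_betw emb UNIV (X zvec)"
    using ps unfolding product_system_def by (elim conjE) assumption
  then show "z \<in> X zvec \<Longrightarrow> \<exists>u. z = emb u" unfolding bij_betw_def by blast
qed

lemma product_system_inner_emb: "inner (emb u) (emb v) = cstar u * v"
  using ps unfolding product_system_def by (elim conjE) meson

lemma product_system_lact_emb: "lact u (emb v) = emb (u * v)"
  using ps unfolding product_system_def by (elim conjE) meson

lemma product_system_mult_closed:
  "\<xi> \<in> X m \<Longrightarrow> \<zeta> \<in> X k \<Longrightarrow> mult \<xi> \<zeta> \<in> X (\<lambda>i. m i + k i)"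
  using ps unfolding product_system_def by (elim conjE) meson

lemma product_system_mult_emb_left: "\<zeta> \<in> X k \<Longrightarrow> mult (emb u) \<zeta> = lact u \<zeta>"
  using ps unfolding product_system_def by (elim conjE) meson

lemma product_system_mult_emb_right: "\<xi> \<in> X m \<Longrightarrow> mult \<xi> (emb u) = ract \<xi> u"
  using ps unfolding product_system_def by (elim conjE) meson

lemma product_system_lact_mult:
  "m \<noteq> zvec \<Longrightarrow> k \<noteq> zvec \<Longrightarrow> \<xi> \<in> X m \<Longrightarrow> \<zeta> \<in> X k \<Longrightarrow>
    lact a (mult \<xi> \<zeta>) = mult (lact a \<xi>) \<zeta>"
  using ps unfolding product_system_def by (elim conjE) meson

lemma product_system_inner_mult:
  "m \<noteq> zvec \<Longrightarrow> k \<noteq> zvec \<Longrightarrow> \<xi> \<in> X m \<Longrightarrow> \<xi>' \<in> X m \<Longrightarrow> \<zeta> \<in> X k \<Longrightarrow> \<zeta>' \<in> X k \<Longrightarrow>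
    inner (mult \<xi> \<zeta>) (mult \<xi>' \<zeta>') = inner \<zeta> (lact (inner \<xi> \<xi>') \<zeta>')"
  using ps unfolding product_system_def by (elim conjE) meson

lemma product_system_inner_lact_inner:
  assumes \<xi>: "\<xi> \<in> X m" and \<eta>: "\<eta> \<in> X m" and \<zeta>: "\<zeta> \<in> X k" and \<zeta>': "\<zeta>' \<in> X k"
  shows "inner \<zeta> (lact (inner \<xi> (lact a \<eta>)) \<zeta>') = inner (mult \<xi> \<zeta>) (lact a (mult \<eta> \<zeta>'))"
proof -
  note corr = product_system_correspondence
  note hm = product_system_hilbert_module
  have a\<eta>: "lact a \<eta> \<in> X m" using correspondence_lact_closed[OF corr \<eta>] .
  consider "m = zvec" | "k = zvec" | "m \<noteq> zvec" "k \<noteq> zvec" by blast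
  then show ?thesis
  proof cases
    case 1
    then obtain x y where xy: "\<xi> = emb x" "\<eta> = emb y"
      using \<xi> \<eta> product_system_zero_fibre_emb by blast
    have y\<zeta>': "lact y \<zeta>' \<in> X k" using correspondence_lact_closed[OF corr \<zeta>'] .
    have "inner \<xi> (lact a \<eta>) = cstar x * (a * y)"
      by (simp add: xy product_system_lact_emb product_system_inner_emb)
    then have "inner \<zeta> (lact (inner \<xi> (lact a \<eta>)) \<zeta>')
        = inner \<zeta> (lact (cstar x) (lact a (lact y \<zeta>')))"
      by (simp add: correspondence_lact_mult[OF corr \<zeta>'] correspondence_lact_mult[OF corr y\<zeta>'])
    also have "\<dots> = inner (lact x \<zeta>) (lact a (lact y \<zeta>'))"
      using correspondence_inner_lact_right[OF corr \<zeta> correspondence_lact_closed[OF corr y\<zeta>'],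
          of "cstar x"]
      by (simp add: cstar_cstar)
    also have "\<dots> = inner (mult \<xi> \<zeta>) (lact a (mult \<eta> \<zeta>'))"
      by (simp add: xy product_system_mult_emb_left[OF \<zeta>] product_system_mult_emb_left[OF \<zeta>'])
    finally show ?thesis .
  next
    case 2
    then obtain u v where uv: "\<zeta> = emb u" "\<zeta>' = emb v"
      using \<zeta> \<zeta>' product_system_zero_fibre_emb by blast
    have \<xi>u: "ract \<xi> u \<in> X m" using hilbert_module_ract_closed[OF hm \<xi>] .
    have "inner (mult \<xi> \<zeta>) (lact a (mult \<eta> \<zeta>')) = inner (ract \<xi> u) (ract (lact a \<eta>) v)"
      by (simp add: uv product_system_mult_emb_right[OF \<xi>] product_system_mult_emb_right[OF \<eta>]
          correspondence_lact_ract[OF corr \<eta>])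
    also have "\<dots> = cstar u * inner \<xi> (lact a \<eta>) * v"
      by (simp add: hilbert_module_inner_ract_right[OF hm \<xi>u a\<eta>]
          hilbert_module_inner_ract_left[OF hm \<xi> a\<eta>])
    also have "\<dots> = inner \<zeta> (lact (inner \<xi> (lact a \<eta>)) \<zeta>')"
      by (simp add: uv product_system_lact_emb product_system_inner_emb mult.assoc)
    finally show ?thesis by (rule sym)
  next
    case 3
    have "inner (mult \<xi> \<zeta>) (lact a (mult \<eta> \<zeta>')) = inner (mult \<xi> \<zeta>) (mult (lact a \<eta>) \<zeta>')"
      using product_system_lact_mult[OF 3 \<eta> \<zeta>'] by simp
    also have "\<dots> = inner \<zeta> (lact (inner \<xi> (lact a \<eta>)) \<zeta>')"
      using product_system_inner_mult[OF 3 \<xi> a\<eta> \<zeta> \<zeta>'] .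
    finally show ?thesis by (rule sym)
  qed
qed

end

lemma I_idealD:
  assumes "a \<in> I_ideal X lact ract inner F" and "\<forall>i\<in>F. m i = 0" and "\<xi> \<in> X m" "\<eta> \<in> X m"
  shows "inner \<xi> (lact a \<eta>) \<in> J_ideal X lact ract inner F"
  using assms unfolding I_ideal_def by (simp only: mem_Collect_eq)

theorem proposition2p7:
  fixes X :: "('i::finite \<Rightarrow> nat) \<Rightarrow> 'x::cvector set"
    and emb :: "'a::cstar_algebra \<Rightarrow> 'x"
    and lact :: "'a \<Rightarrow> 'x \<Rightarrow> 'x"
    and ract :: "'x \<Rightarrow> 'a \<Rightarrow> 'x"
    and inner :: "'x \<Rightarrow> 'x \<Rightarrow> 'a"
    and mult :: "'x \<Rightarrow> 'x \<Rightarrow> 'x"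
    and F :: "'i set"
  assumes "product_system X emb lact ract inner mult"
    and "F \<noteq> {}"
    and "a \<in> I_ideal X lact ract inner F"
    and "\<forall>i\<in>F. m i = 0"
    and "\<xi> \<in> X m" and "\<eta> \<in> X m"
  shows "inner \<xi> (lact a \<eta>) \<in> I_ideal X lact ract inner F"
proof -
  have "inner \<zeta> (lact (inner \<xi> (lact a \<eta>)) \<zeta>') \<in> J_ideal X lact ract inner F"
    if k: "\<forall>i\<in>F. k i = 0" and \<zeta>: "\<zeta> \<in> X k" "\<zeta>' \<in> X k" for k \<zeta> \<zeta>'
  proof -
    have "\<forall>i\<in>F. m i + k i = 0" using assms(4) k by simp
    then have "inner (mult \<xi> \<zeta>) (lact a (mult \<eta> \<zeta>')) \<in> J_ideal X lact ract inner F"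
      by (rule I_idealD[OF assms(3) _ product_system_mult_closed[OF assms(1,5) \<zeta>(1)]
            product_system_mult_closed[OF assms(1,6) \<zeta>(2)]])
    then show ?thesis
      using product_system_inner_lact_inner[OF assms(1,5,6) \<zeta>] by simp
  qed
  moreover have "inner \<xi> (lact a \<eta>) \<in> J_ideal X lact ract inner F"
    using I_idealD[OF assms(3-6)] .
  ultimately show ?thesis unfolding I_ideal_def by blast
qed

end
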